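(* Let $\sigma$ have substitution matrix $M_\sigma=\begin{pmatrix}A&C\\0&B\end{pmatrix}$ with $A,B$ primitive, $C\neq0$ and $\rho(A)>\rho(B)>1$, and let $\Omega$ be the tiling space of the tile substitution $\mathcal G$ associated with $\sigma$. Put $\alpha=\log\rho(B)/\log\rho(A)$. Then there exists $K>0$ such that for every $\mathcal T\in\Omega$ and every $t>0$, $$N_{\mathcal T}(\mathcal B,t)\le K\,t^\alpha .$$
   Context: $\mathcal A=\{1,\dots,N\}$, $\sigma:\mathcal A\to\mathcal A^+$ a substitution; $M_\sigma$ has $(a,b)$ entry equal to the number of occurrences of $a$ in $\sigma(b)$; $\mathcal B$ is the set of letters indexing the block $B$. Let $\xi_1,\dots,\xi_N>0$ satisfy $|\sigma^k(i)|/(\xi_i\rho(A)^k)\to1$ as $k\to\infty$ (they form a left eigenvector of $M_\sigma$ for $\lambda:=\rho(A)$). Associated tile substitution: for $a\in\mathcal A$, the prototile $I_a$ is the interval of length $\xi_a$ centered at $0$, labeled $a$; for $v\in\mathcal A$ with $\sigma(v)=w_1\cdots w_m$, $\mathcal G(I_v)$ is the patch of consecutive translates of $I_{w_1},\dots,I_{w_m}$ (left to right) exactly subdividing $\lambda I_v$; $\mathcal G(I+u)=\mathcal G(I)+\lambda u$. The tiling space $\Omega$ is the set of tilings of $\mathbb R$ by translates of the $I_a$ all of whose finite subpatches are subpatches of some $\mathcal G^n(I_a)+u$. For $\mathcal T\in\Omega$ and $t>0$, $N_{\mathcal T}(\mathcal B,t)$ is the number of tiles of $\mathcal T$ that are translates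 of some $I_b$, $b\in\mathcal B$, and are contained in $[0,t]$. *)

theory Defs
  imports "Jordan_Normal_Form.Spectral_Radius"
begin

text \<open>Letters of the alphabet are the naturals 1..N. A substitution is a map
  sigma :: nat => nat list (nonempty words over {1..N} on the alphabet).\<close>

definition subst_word :: "(nat \<Rightarrow> nat list) \<Rightarrow> nat list \<Rightarrow> nat list" where
  "subst_word \<sigma> w = concat (map \<sigma> w)"

definition subst_iter :: "(nat \<Rightarrow> nat list) \<Rightarrow> nat \<Rightarrow> nat \<Rightarrow> nat list" where
  "subst_iter \<sigma> k a = ((subst_word \<sigma>) ^^ k) [a]"

text \<open>Block of the substitution matrix: rows indexed by letters r0+1..r0+p
  (occurring letter), columns by letters c0+1..c0+q (image letter);
  entry (a,b) = number of occurrences of a in sigma(b).\<close>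
definition subst_block :: "(nat \<Rightarrow> nat list) \<Rightarrow> nat \<Rightarrow> nat \<Rightarrow> nat \<Rightarrow> nat \<Rightarrow> nat mat" where
  "subst_block \<sigma> r0 p c0 q = mat p q (\<lambda>(i,j). count_list (\<sigma> (c0 + j + 1)) (r0 + i + 1))"

definition primitive_mat :: "nat mat \<Rightarrow> bool" where
  "primitive_mat A \<longleftrightarrow> dim_row A = dim_col A \<and>
     (\<exists>k\<ge>1. \<forall>i<dim_row A. \<forall>j<dim_col A. (A ^\<^sub>m k) $$ (i,j) > 0)"

definition rho :: "nat mat \<Rightarrow> real" where
  "rho A = spectral_radius (map_mat of_nat A)"

text \<open>A tile is a pair (a, u): the prototile I_a (interval of length xi a
  centred at 0, labelled a) translated by u.\<close>
type_synonym tile = "nat \<times> real"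

definition tile_set :: "(nat \<Rightarrow> real) \<Rightarrow> tile \<Rightarrow> real set" where
  "tile_set \<xi> t = {snd t - \<xi> (fst t) / 2 .. snd t + \<xi> (fst t) / 2}"

definition tile_interior :: "(nat \<Rightarrow> real) \<Rightarrow> tile \<Rightarrow> real set" where
  "tile_interior \<xi> t = {snd t - \<xi> (fst t) / 2 <..< snd t + \<xi> (fst t) / 2}"

definition translate_patch :: "real \<Rightarrow> tile set \<Rightarrow> tile set" where
  "translate_patch u P = (\<lambda>(a, x). (a, x + u)) ` P"

text \<open>G(I_v + u): consecutive translates of I_{w_1},...,I_{w_m} (w = sigma v),
  left to right, starting at the left endpoint of lambda (I_v + u).\<close>
definition tile_subst :: "(nat \<Rightarrow> nat list) \<Rightarrow> (nat \<Rightarrow> real) \<Rightarrow> real \<Rightarrow> tile \<Rightarrow> tile set" where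
  "tile_subst \<sigma> \<xi> lam t =
     (let v = fst t; u = snd t; w = \<sigma> v in
      {(w ! j, lam * u - lam * \<xi> v / 2 + (\<Sum>i<j. \<xi> (w ! i)) + \<xi> (w ! j) / 2) | j. j < length w})"

definition patch_subst :: "(nat \<Rightarrow> nat list) \<Rightarrow> (nat \<Rightarrow> real) \<Rightarrow> real \<Rightarrow> tile set \<Rightarrow> tile set" where
  "patch_subst \<sigma> \<xi> lam P = (\<Union>t\<in>P. tile_subst \<sigma> \<xi> lam t)"

definition is_tiling :: "nat \<Rightarrow> (nat \<Rightarrow> real) \<Rightarrow> tile set \<Rightarrow> bool" where
  "is_tiling N \<xi> T \<longleftrightarrow>
     (\<forall>t\<in>T. fst t \<in> {1..N}) \<and>
     (\<forall>x::real. \<exists>t\<in>T. x \<in> tile_set \<xi> t) \<and>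
     (\<forall>t1\<in>T. \<forall>t2\<in>T. t1 \<noteq> t2 \<longrightarrow> tile_interior \<xi> t1 \<inter> tile_interior \<xi> t2 = {})"

definition tiling_space :: "nat \<Rightarrow> (nat \<Rightarrow> nat list) \<Rightarrow> (nat \<Rightarrow> real) \<Rightarrow> real \<Rightarrow> tile set set" where
  "tiling_space N \<sigma> \<xi> lam =
     {T. is_tiling N \<xi> T \<and>
         (\<forall>P. P \<subseteq> T \<and> finite P \<longrightarrow>
            (\<exists>n a u. a \<in> {1..N} \<and> P \<subseteq> translate_patch u ((patch_subst \<sigma> \<xi> lam ^^ n) {(a, 0)})))}"

definition count_tiles :: "(nat \<Rightarrow> real) \<Rightarrow> tile set \<Rightarrow> nat set \<Rightarrow> real \<Rightarrow> nat" where
  "count_tiles \<xi> T B t = card {tl\<in>T. fst tl \<in> B \<and> tile_set \<xi> tl \<subseteq> {0..t}}"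

end

theory Submission
  imports Defs
begin

text \<open>Letters of the upper block never produce letters of the lower block \<open>B\<close>, so the
  number of \<open>B\<close>-letters in \<open>\<sigma>\<^sup>k(v)\<close> is governed by \<open>B\<close> alone. Its Jordan form bounds
  this number by \<open>\<rho>(B)\<^sup>k\<close> times a polynomial in \<open>k\<close>, and supermultiplicativity of the
  minimum over \<open>B\<close>-letters, together with primitivity of \<open>B\<close>, removes the polynomial:
  \<open>\<sigma>\<^sup>k(v)\<close> contains at most \<open>C \<rho>(B)\<^sup>k\<close> letters of \<open>B\<close>.
  A finite patch of a tiling in \<open>\<Omega>\<close> is a translate of part of \<open>\<G>\<^sup>n(I\<^sub>a)\<close>, i.e. of the
  word \<open>\<sigma>\<^sup>n(a)\<close> laid out with tile lengths \<open>\<xi>\<close>. Cutting it into the blocks \<open>\<sigma>\<^sup>k(v)\<close>,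
  of length \<open>\<lambda>\<^sup>k \<xi>\<^sub>v \<ge> \<lambda>\<^sup>k \<delta>\<close>, a window \<open>[0, t]\<close> with \<open>\<lambda>\<^sup>k \<delta> \<le> t < \<lambda>\<^sup>k\<^sup>+\<^sup>1 \<delta>\<close> meets at
  most \<open>\<lambda> + 2\<close> blocks, so it contains at most \<open>C (\<lambda> + 2) \<rho>(B)\<^sup>k \<le> K t\<^sup>\<alpha>\<close> tiles
  labelled in \<open>B\<close>.\<close>

section \<open>Words laid out as tiles\<close>

lemma subst_word_Nil [simp]: "subst_word \<sigma> [] = []"
  and subst_word_Cons [simp]: "subst_word \<sigma> (v # w) = \<sigma> v @ subst_word \<sigma> w"
  and subst_word_append [simp]: "subst_word \<sigma> (u @ w) = subst_word \<sigma> u @ subst_word \<sigma> w"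
  by (simp_all add: subst_word_def)

lemma subst_iter_0 [simp]: "subst_iter \<sigma> 0 a = [a]"
  and subst_iter_1 [simp]: "subst_iter \<sigma> (Suc 0) a = \<sigma> a"
  by (simp_all add: subst_iter_def subst_word_def)

lemma funpow_subst_word: "(subst_word \<sigma> ^^ k) w = concat (map (subst_iter \<sigma> k) w)"
proof (induction k arbitrary: w)
  case 0
  show ?case by (induction w) auto
next
  case (Suc k)
  have "(subst_word \<sigma> ^^ Suc k) w = subst_word \<sigma> (concat (map (subst_iter \<sigma> k) w))"
    using Suc by simp
  also have "\<dots> = concat (map (subst_iter \<sigma> (Suc k)) w)"
    by (induction w) (auto simp: subst_iter_def)
  finally show ?case .
qed

lemma subst_iter_add:
  "subst_iter \<sigma> (j + k) a = concat (map (subst_iter \<sigma> k) (subst_iter \<sigma> j a))"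
  by (simp add: subst_iter_def funpow_add funpow_subst_word[symmetric] add.commute[of j])

lemma subst_iter_Suc: "subst_iter \<sigma> (Suc k) a = concat (map (subst_iter \<sigma> k) (\<sigma> a))"
  using subst_iter_add[of \<sigma> 1 k a] by simp

lemma subst_iter_Suc_outer: "subst_iter \<sigma> (Suc k) a = subst_word \<sigma> (subst_iter \<sigma> k a)"
  by (simp add: subst_iter_def)

lemma set_subst_iter_subset:
  assumes "\<forall>b\<in>S. set (\<sigma> b) \<subseteq> S" and "a \<in> S"
  shows "set (subst_iter \<sigma> k a) \<subseteq> S"
  using assms(2)
proof (induction k arbitrary: a)
  case (Suc k)
  then show ?case using assms(1) by (fastforce simp: subst_iter_Suc)
qed simp

lemma sum_list_map_eq_sum_count_list:
  fixes f :: "'a \<Rightarrow> 'b :: comm_semiring_1"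
  assumes "set xs \<subseteq> X" and "finite X"
  shows "sum_list (map f xs) = (\<Sum>x\<in>X. of_nat (count_list xs x) * f x)"
  using assms(1)
proof (induction xs)
  case (Cons a xs)
  have "(\<Sum>x\<in>X. of_nat (count_list (a # xs) x) * f x)
      = (\<Sum>x\<in>X. (if a = x then f x else 0) + of_nat (count_list xs x) * f x)"
    by (intro sum.cong) (auto simp: distrib_right)
  also have "\<dots> = (\<Sum>x\<in>X. (if a = x then f x else 0)) + (\<Sum>x\<in>X. of_nat (count_list xs x) * f x)"
    by (rule sum.distrib)
  also have "(\<Sum>x\<in>X. (if a = x then f x else 0)) = f a"
    using Cons.prems assms(2) by (simp add: sum.delta)
  finally show ?case using Cons by simp
qed simp

definition tile_length :: "(nat \<Rightarrow> real) \<Rightarrow> nat list \<Rightarrow> real" where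
  "tile_length \<xi> w = sum_list (map \<xi> w)"

lemma tile_length_simps [simp]:
  "tile_length \<xi> [] = 0"
  "tile_length \<xi> (v # w) = \<xi> v + tile_length \<xi> w"
  "tile_length \<xi> (u @ w) = tile_length \<xi> u + tile_length \<xi> w"
  by (simp_all add: tile_length_def)

lemma tile_length_concat:
  "tile_length \<xi> (concat (map f w)) = sum_list (map (\<lambda>x. tile_length \<xi> (f x)) w)"
  by (induction w) auto

lemma tile_length_nonneg: "\<forall>v\<in>set w. 0 \<le> \<xi> v \<Longrightarrow> 0 \<le> tile_length \<xi> w"
  unfolding tile_length_def by (intro sum_list_nonneg) auto

fun place_word :: "(nat \<Rightarrow> real) \<Rightarrow> real \<Rightarrow> nat list \<Rightarrow> tile set" where
  "place_word \<xi> c [] = {}"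
| "place_word \<xi> c (v # w) = insert (v, c + \<xi> v / 2) (place_word \<xi> (c + \<xi> v) w)"

lemma finite_place_word [simp]: "finite (place_word \<xi> c w)"
  by (induction w arbitrary: c) auto

lemma fst_place_word: "tt \<in> place_word \<xi> c w \<Longrightarrow> fst tt \<in> set w"
  by (induction w arbitrary: c) auto

lemma place_word_append:
  "place_word \<xi> c (u @ w) = place_word \<xi> c u \<union> place_word \<xi> (c + tile_length \<xi> u) w"
  by (induction u arbitrary: c) (auto simp: add.assoc)

lemma place_word_conv_nth:
  "place_word \<xi> c w = {(w ! j, c + (\<Sum>i<j. \<xi> (w ! i)) + \<xi> (w ! j) / 2) | j. j < length w}"
proof (induction w arbitrary: c)
  case (Cons v w)
  let ?g = "\<lambda>j. ((v # w) ! j, c + (\<Sum>i<j. \<xi> ((v # w) ! i)) + \<xi> ((v # w) ! j) / 2)"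
  have shift: "(\<Sum>i<Suc j. \<xi> ((v # w) ! i)) = \<xi> v + (\<Sum>i<j. \<xi> (w ! i))" for j
    by (simp del: sum.lessThan_Suc add: sum.lessThan_Suc_shift)
  have "{?g j | j. j < length (v # w)} = ?g ` {..<Suc (length w)}"
    by auto
  also have "\<dots> = insert (?g 0) ((\<lambda>j. ?g (Suc j)) ` {..<length w})"
    by (simp only: lessThan_Suc_eq_insert_0 image_insert image_image)
  also have "(\<lambda>j. ?g (Suc j)) ` {..<length w}
      = {(w ! j, (c + \<xi> v) + (\<Sum>i<j. \<xi> (w ! i)) + \<xi> (w ! j) / 2) | j. j < length w}"
    unfolding shift by (auto simp: algebra_simps)
  finally show ?case
    using Cons[of "c + \<xi> v"] by simp
qed simp

lemma place_word_subset_interval: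
  assumes "\<forall>v\<in>set w. 0 \<le> \<xi> v" and "tt \<in> place_word \<xi> c w"
  shows "tile_set \<xi> tt \<subseteq> {c .. c + tile_length \<xi> w}"
  using assms
proof (induction w arbitrary: c)
  case (Cons v w)
  then have "tile_set \<xi> (v, c + \<xi> v / 2) \<subseteq> {c .. c + tile_length \<xi> (v # w)}"
    by (auto simp: tile_set_def tile_length_nonneg)
  moreover have "tile_set \<xi> tt \<subseteq> {c .. c + tile_length \<xi> (v # w)}"
    if "tt \<in> place_word \<xi> (c + \<xi> v) w"
    using Cons that by fastforce
  ultimately show ?case using Cons.prems(2) by auto
qed simp

lemma tile_subst_eq_place_word:
  "tile_subst \<sigma> \<xi> lam (v, x) = place_word \<xi> (lam * x - lam * \<xi> v / 2) (\<sigma> v)"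
  by (simp add: tile_subst_def place_word_conv_nth Let_def)

lemma patch_subst_place_word:
  assumes "\<forall>v\<in>set w. tile_length \<xi> (\<sigma> v) = lam * \<xi> v"
  shows "patch_subst \<sigma> \<xi> lam (place_word \<xi> c w) = place_word \<xi> (lam * c) (subst_word \<sigma> w)"
  using assms
proof (induction w arbitrary: c)
  case (Cons v w)
  then show ?case
    by (simp add: patch_subst_def tile_subst_eq_place_word place_word_append algebra_simps)
qed (simp add: patch_subst_def)

definition count_letters :: "nat set \<Rightarrow> nat list \<Rightarrow> nat" where
  "count_letters S w = length (filter (\<lambda>x. x \<in> S) w)"

lemma count_letters_concat:
  "count_letters S (concat (map f w)) = sum_list (map (\<lambda>x. count_letters S (f x)) w)"
  by (induction w) (auto simp: count_letters_def)

lemma count_letters_eq_sum_count_list: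
  assumes "finite S"
  shows "count_letters S w = (\<Sum>i\<in>S. count_list w i)"
proof -
  have "count_letters S w = (\<Sum>i\<in>S. count_list (filter (\<lambda>y. y \<in> S) w) i)"
    unfolding count_letters_def using assms by (intro sum_count_set[symmetric]) auto
  also have "\<dots> = (\<Sum>i\<in>S. count_list w i)"
  proof (intro sum.cong refl)
    show "count_list (filter (\<lambda>y. y \<in> S) w) i = count_list w i" if "i \<in> S" for i
      using that by (induction w) auto
  qed
  finally show ?thesis .
qed

lemma count_letters_mult_le_sum_list:
  assumes "\<forall>x\<in>S. c \<le> f x"
  shows "count_letters S w * c \<le> sum_list (map f w)"
  using assms by (induction w) (auto simp: count_letters_def add_mono trans_le_add2)

definition window_count ::
    "(nat \<Rightarrow> real) \<Rightarrow> nat set \<Rightarrow> real \<Rightarrow> nat list \<Rightarrow> real \<Rightarrow> real \<Rightarrow> nat" where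
  "window_count \<xi> S c w lo hi =
     card {tt \<in> place_word \<xi> c w. fst tt \<in> S \<and> tile_set \<xi> tt \<subseteq> {lo..hi}}"

lemma window_count_le_count_letters: "window_count \<xi> S c w lo hi \<le> count_letters S w"
proof (induction w arbitrary: c)
  case (Cons v w)
  let ?P = "\<lambda>tt. fst tt \<in> S \<and> tile_set \<xi> tt \<subseteq> {lo..hi}"
  let ?R = "{tt \<in> place_word \<xi> (c + \<xi> v) w. ?P tt}"
  have "window_count \<xi> S c (v # w) lo hi \<le> (if v \<in> S then Suc (card ?R) else card ?R)"
  proof (cases "v \<in> S")
    case True
    have "window_count \<xi> S c (v # w) lo hi \<le> card (insert (v, c + \<xi> v / 2) ?R)"
      unfolding window_count_def by (intro card_mono) auto
    also have "\<dots> \<le> Suc (card ?R)"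
      by (simp add: card_insert_if)
    finally show ?thesis using True by simp
  next
    case False
    then have "{tt \<in> place_word \<xi> c (v # w). ?P tt} = ?R" by auto
    then show ?thesis using False by (simp add: window_count_def)
  qed
  also have "\<dots> \<le> count_letters S (v # w)"
    using Cons[of "c + \<xi> v"] by (simp add: window_count_def count_letters_def)
  finally show ?case .
qed (simp add: window_count_def count_letters_def)

lemma window_count_append:
  "window_count \<xi> S c (u @ w) lo hi
     \<le> window_count \<xi> S c u lo hi + window_count \<xi> S (c + tile_length \<xi> u) w lo hi"
proof -
  have Un: "{tt \<in> A \<union> B. P tt} = {tt \<in> A. P tt} \<union> {tt \<in> B. P tt}" for A B :: "tile set" and P
    by blast
  show ?thesis
    unfolding window_count_def place_word_append Un by (rule card_Un_le)
qed

lemma window_count_eq_0_if_disjoint: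
  assumes "\<forall>v\<in>set w. 0 \<le> \<xi> v" and "hi < c \<or> c + tile_length \<xi> w < lo"
  shows "window_count \<xi> S c w lo hi = 0"
proof -
  have False if tt: "tt \<in> place_word \<xi> c w" "tile_set \<xi> tt \<subseteq> {lo..hi}" for tt
  proof -
    have "0 \<le> \<xi> (fst tt)" using assms(1) fst_place_word[OF tt(1)] by auto
    then have "snd tt \<in> tile_set \<xi> tt" by (auto simp: tile_set_def)
    moreover have "tile_set \<xi> tt \<subseteq> {c .. c + tile_length \<xi> w}"
      by (rule place_word_subset_interval[OF assms(1) tt(1)])
    ultimately show False using tt(2) assms(2) by fastforce
  qed
  then have "{tt \<in> place_word \<xi> c w. fst tt \<in> S \<and> tile_set \<xi> tt \<subseteq> {lo..hi}} = {}"
    by blast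
  then show ?thesis unfolding window_count_def by simp
qed

lemma window_count_eq_0_if_short:
  assumes "0 \<le> \<delta>" and "\<forall>v\<in>set w. \<delta> \<le> \<xi> v" and "hi - lo < \<delta>"
  shows "window_count \<xi> S c w lo hi = 0"
proof -
  have False if tt: "tt \<in> place_word \<xi> c w" "tile_set \<xi> tt \<subseteq> {lo..hi}" for tt
  proof -
    have "\<delta> \<le> \<xi> (fst tt)" using assms(2) fst_place_word[OF tt(1)] by auto
    then have "snd tt - \<xi> (fst tt) / 2 \<in> tile_set \<xi> tt" "snd tt + \<xi> (fst tt) / 2 \<in> tile_set \<xi> tt"
      using assms(1) by (auto simp: tile_set_def)
    then have "lo \<le> snd tt - \<xi> (fst tt) / 2" "snd tt + \<xi> (fst tt) / 2 \<le> hi"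
      using tt(2) by auto
    then show False using assms(3) \<open>\<delta> \<le> \<xi> (fst tt)\<close> by linarith
  qed
  then have "{tt \<in> place_word \<xi> c w. fst tt \<in> S \<and> tile_set \<xi> tt \<subseteq> {lo..hi}} = {}"
    by blast
  then show ?thesis unfolding window_count_def by simp
qed

text \<open>An upper bound for the number of consecutive pieces of length at least \<open>D\<close>,
  laid from \<open>c\<close> onwards, that meet \<open>[lo, hi]\<close>.\<close>

definition window_pieces :: "real \<Rightarrow> real \<Rightarrow> real \<Rightarrow> real \<Rightarrow> real" where
  "window_pieces D lo hi c =
     (if hi < c then 0 else if lo \<le> c then (hi - c) / D + 1 else (hi - lo) / D + 2)"

lemma window_pieces_nonneg: "0 < D \<Longrightarrow> lo \<le> hi \<Longrightarrow> 0 \<le> window_pieces D lo hi c"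
  by (simp add: window_pieces_def)

lemma window_pieces_le:
  assumes "0 < D" "lo \<le> hi"
  shows "window_pieces D lo hi c \<le> (hi - lo) / D + 2"
proof -
  have "(hi - c) / D \<le> (hi - lo) / D" if "lo \<le> c"
    using assms that by (simp add: divide_right_mono)
  then show ?thesis using assms by (auto simp: window_pieces_def)
qed

lemma window_pieces_step:
  assumes "0 < D" "lo \<le> hi" "D \<le> l"
  shows "(if hi < c \<or> c + l < lo then 0 else 1) + window_pieces D lo hi (c + l)
           \<le> window_pieces D lo hi c"
proof -
  have "(hi - c - l) / D \<le> (hi - c) / D - 1" using assms by (simp add: field_simps)
  moreover have "(hi - (c + l)) / D \<le> (hi - lo) / D" if "lo \<le> c + l"
    using assms that by (simp add: divide_right_mono)
  ultimately show ?thesis using assms unfolding window_pieces_def by (auto simp: algebra_simps)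
qed

lemma window_count_concat_le:
  assumes D: "0 < D" and lo_hi: "lo \<le> hi" and M: "0 \<le> M"
    and pieces: "\<forall>v\<in>set ws. D \<le> tile_length \<xi> (f v) \<and> real (count_letters S (f v)) \<le> M
                             \<and> (\<forall>x\<in>set (f v). 0 \<le> \<xi> x)"
  shows "real (window_count \<xi> S c (concat (map f ws)) lo hi) \<le> M * window_pieces D lo hi c"
  using pieces
proof (induction ws arbitrary: c)
  case Nil
  then show ?case using M window_pieces_nonneg[OF D lo_hi] by (simp add: window_count_def)
next
  case (Cons v ws)
  let ?l = "tile_length \<xi> (f v)"
  have first: "real (window_count \<xi> S c (f v) lo hi) \<le> M * (if hi < c \<or> c + ?l < lo then 0 else 1)"
  proof (cases "hi < c \<or> c + ?l < lo")
    case True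
    then show ?thesis using window_count_eq_0_if_disjoint[of "f v" \<xi> hi c lo S] Cons.prems by simp
  next
    case False
    have "real (window_count \<xi> S c (f v) lo hi) \<le> real (count_letters S (f v))"
      using window_count_le_count_letters[of \<xi> S c "f v" lo hi] by simp
    then show ?thesis using False Cons.prems by auto
  qed
  have "real (window_count \<xi> S c (concat (map f (v # ws))) lo hi)
      \<le> real (window_count \<xi> S c (f v) lo hi) + real (window_count \<xi> S (c + ?l) (concat (map f ws)) lo hi)"
    using window_count_append[of \<xi> S c "f v" "concat (map f ws)" lo hi] by simp
  also have "\<dots> \<le> M * ((if hi < c \<or> c + ?l < lo then 0 else 1) + window_pieces D lo hi (c + ?l))"
  proof -
    have "real (window_count \<xi> S (c + ?l) (concat (map f ws)) lo hi)
        \<le> M * window_pieces D lo hi (c + ?l)"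
      using Cons by simp
    then show ?thesis using first by (simp add: distrib_left)
  qed
  also have "\<dots> \<le> M * window_pieces D lo hi c"
    using window_pieces_step[OF D lo_hi] Cons.prems M by (intro mult_left_mono) auto
  finally show ?case .
qed

section \<open>Growth of matrix powers and of supermultiplicative sequences\<close>

lemma smult_mat_pow:
  fixes A :: "'a :: comm_semiring_1 mat"
  assumes "A \<in> carrier_mat n n"
  shows "(c \<cdot>\<^sub>m A) ^\<^sub>m k = c ^ k \<cdot>\<^sub>m A ^\<^sub>m k"
proof (induction k)
  case 0
  show ?case by (rule eq_matI) auto
next
  case (Suc k)
  have "(c \<cdot>\<^sub>m A) ^\<^sub>m Suc k = (c ^ k \<cdot>\<^sub>m A ^\<^sub>m k) * (c \<cdot>\<^sub>m A)"
    using Suc by simp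
  also have "\<dots> = c ^ Suc k \<cdot>\<^sub>m A ^\<^sub>m Suc k"
    using assms by (intro eq_matI) (auto simp: ac_simps)
  finally show ?case .
qed

lemma spectral_radius_smult_le:
  assumes A: "A \<in> carrier_mat n n" and n: "0 < n" and c: "c \<noteq> 0"
  shows "spectral_radius (c \<cdot>\<^sub>m A) \<le> norm c * spectral_radius A"
proof -
  have cA: "c \<cdot>\<^sub>m A \<in> carrier_mat n n" using A by simp
  obtain e where e: "e \<in> spectrum (c \<cdot>\<^sub>m A)" "spectral_radius (c \<cdot>\<^sub>m A) = norm e"
    using spectral_radius_mem_max(1)[OF cA n] by auto
  then obtain v where v: "v \<in> carrier_vec n" "v \<noteq> 0\<^sub>v n" "(c \<cdot>\<^sub>m A) *\<^sub>v v = e \<cdot>\<^sub>v v"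
    using cA unfolding spectrum_def eigenvalue_def eigenvector_def by auto
  have "A *\<^sub>v v = (e / c) \<cdot>\<^sub>v v"
  proof (rule eq_vecI)
    fix i assume "i < dim_vec ((e / c) \<cdot>\<^sub>v v)"
    then have i: "i < n" using v(1) by simp
    have "c * (A *\<^sub>v v) $ i = e * v $ i"
      using arg_cong[OF v(3), of "\<lambda>x. x $ i"] A v(1) i by (simp add: scalar_prod_def sum_distrib_left ac_simps)
    then show "(A *\<^sub>v v) $ i = ((e / c) \<cdot>\<^sub>v v) $ i"
      using c i v(1) by (simp add: field_simps)
  qed (use A v(1) in simp)
  then have "e / c \<in> spectrum A"
    using A v unfolding spectrum_def eigenvalue_def eigenvector_def by auto
  then have "norm (e / c) \<le> spectral_radius A"
    using spectral_radius_mem_max(2)[OF A n] by auto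
  then show ?thesis
    using e(2) c by (simp add: norm_divide divide_le_eq mult.commute)
qed

text \<open>Rescaling by the spectral radius reduces to the polynomial growth of matrices of
  spectral radius at most one.\<close>

lemma spectral_radius_pow_norm_bound:
  assumes A: "A \<in> carrier_mat n n" and r: "0 < spectral_radius A"
  shows "\<exists>c1 c2. \<forall>k i j. i < n \<longrightarrow> j < n \<longrightarrow>
           norm ((A ^\<^sub>m k) $$ (i, j)) \<le> spectral_radius A ^ k * (c1 + c2 * real k ^ (n - 1))"
proof (cases "n = 0")
  case False
  define r where "r = spectral_radius A"
  define B where "B = complex_of_real (1 / r) \<cdot>\<^sub>m A"
  have B: "B \<in> carrier_mat n n" using A by (simp add: B_def)
  have "spectral_radius B \<le> norm (complex_of_real (1 / r)) * r"
    unfolding B_def r_def using A False r by (intro spectral_radius_smult_le) auto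
  then have "spectral_radius B \<le> 1" using r by (simp add: r_def norm_divide)
  then obtain c1 c2 where bound: "\<And>k. norm_bound (B ^\<^sub>m k) (c1 + c2 * of_nat k ^ (n - 1))"
    using spectral_radius_jnf_norm_bound_le_1_upper_triangular[OF B] by blast
  have "norm ((A ^\<^sub>m k) $$ (i, j)) \<le> r ^ k * (c1 + c2 * real k ^ (n - 1))"
    if "i < n" "j < n" for k i j
  proof -
    have "(B ^\<^sub>m k) $$ (i, j) = complex_of_real (1 / r) ^ k * (A ^\<^sub>m k) $$ (i, j)"
      using that A by (simp add: B_def smult_mat_pow)
    moreover have "norm ((B ^\<^sub>m k) $$ (i, j)) \<le> c1 + c2 * real k ^ (n - 1)"
      using bound[of k] B that unfolding norm_bound_def by simp
    ultimately have "(1 / r) ^ k * norm ((A ^\<^sub>m k) $$ (i, j)) \<le> c1 + c2 * real k ^ (n - 1)"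
      using r by (simp add: norm_mult norm_power norm_divide r_def)
    then show ?thesis using r by (simp add: r_def field_simps power_one_over)
  qed
  then show ?thesis unfolding r_def by blast
qed simp

lemma le_one_if_powers_poly_bounded:
  fixes x E :: real
  assumes "0 \<le> x" and "0 < E" and bound: "\<And>n. 1 \<le> n \<Longrightarrow> x ^ n \<le> E * real n ^ d"
  shows "x \<le> 1"
proof -
  have lim: "(\<lambda>n. root n E * root n (real n) ^ d) \<longlonglongrightarrow> 1 * 1 ^ d"
    by (intro tendsto_mult tendsto_power LIMSEQ_root_const LIMSEQ_root assms(2))
  have "x \<le> root n E * root n (real n) ^ d" if n: "1 \<le> n" for n
  proof -
    have "x = root n (x ^ n)" using assms(1) n by (simp add: real_root_pos2)
    also have "\<dots> \<le> root n (E * real n ^ d)" using n bound[OF n] by (intro real_root_le_mono) auto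
    also have "\<dots> = root n E * root n (real n) ^ d" using n by (simp add: real_root_mult real_root_power)
    finally show ?thesis .
  qed
  then have "x \<le> 1 * 1 ^ d" by (intro LIMSEQ_le_const[OF lim]) auto
  then show ?thesis by simp
qed

text \<open>Since \<open>g k ^ n \<le> g (n * k)\<close>, the polynomial factor disappears after taking
  \<open>n\<close>-th roots.\<close>

lemma supermultiplicative_le_power:
  fixes g :: "nat \<Rightarrow> real"
  assumes nonneg: "\<And>k. 0 \<le> g k" and supermult: "\<And>j k. g j * g k \<le> g (j + k)"
    and r: "0 < r" and E: "0 < E" and growth: "\<And>n. 1 \<le> n \<Longrightarrow> g n \<le> E * r ^ n * real n ^ d"
  shows "g k \<le> r ^ k"
proof (cases "k = 0")
  case True
  have "g 0 * g 0 \<le> g 0 * 1" using supermult[of 0 0] by simp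
  then have "g 0 \<le> 1" using nonneg[of 0] by (cases "g 0 = 0") auto
  then show ?thesis using True by simp
next
  case False
  have pow: "g k ^ Suc n \<le> g (Suc n * k)" for n
  proof (induction n)
    case (Suc n)
    have "g k ^ Suc (Suc n) \<le> g k * g (Suc n * k)"
      using Suc nonneg[of k] by (simp add: mult_left_mono)
    also have "\<dots> \<le> g (Suc (Suc n) * k)" using supermult[of k "Suc n * k"] by simp
    finally show ?case .
  qed simp
  have "g k / r ^ k \<le> 1"
  proof (rule le_one_if_powers_poly_bounded)
    show "0 \<le> g k / r ^ k" "0 < E * real k ^ d" using nonneg r E False by auto
    fix n :: nat assume n: "1 \<le> n"
    then obtain n' where n': "n = Suc n'" by (cases n) auto
    have "(g k / r ^ k) ^ n = g k ^ n / r ^ (n * k)"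
      by (simp add: power_divide power_mult mult.commute)
    also have "\<dots> \<le> g (n * k) / r ^ (n * k)"
      using pow[of n'] n' r by (simp add: divide_right_mono)
    also have "\<dots> \<le> E * real (n * k) ^ d"
      using growth[of "n * k"] n False r by (simp add: divide_le_eq mult_ac)
    also have "\<dots> = E * real k ^ d * real n ^ d"
      by (simp add: power_mult_distrib)
    finally show "(g k / r ^ k) ^ n \<le> E * real k ^ d * real n ^ d" .
  qed
  then show ?thesis using r by (simp add: divide_le_eq)
qed

lemma ex_power_bracket:
  fixes b x :: real
  assumes "1 < b" "1 \<le> x"
  shows "\<exists>k. b ^ k \<le> x \<and> x < b ^ Suc k"
proof -
  define k where "k = nat \<lfloor>log b x\<rfloor>"
  have "0 \<le> log b x" using assms by simp
  then have k: "real k = real_of_int \<lfloor>log b x\<rfloor>" by (simp add: k_def)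
  have "b powr real k \<le> x \<and> x < b powr (real k + 1)"
    using floor_log_eq_powr_iff[of x b "\<lfloor>log b x\<rfloor>"] assms unfolding k by simp
  then show ?thesis
    using assms by (intro exI[of _ k]) (simp add: powr_realpow[symmetric] powr_add mult.commute)
qed

lemma power_le_powr_ln_ratio:
  fixes lam r x :: real
  assumes "1 < lam" "1 \<le> r" "lam ^ k \<le> x"
  shows "r ^ k \<le> x powr (ln r / ln lam)"
proof -
  have "r ^ k = r powr real k"
    using assms(2) by (simp add: powr_realpow)
  also have "\<dots> = (lam ^ k) powr (ln r / ln lam)"
    using assms(1,2) by (simp add: powr_def ln_realpow)
  also have "\<dots> \<le> x powr (ln r / ln lam)"
    using assms by (intro powr_mono2) auto
  finally show ?thesis .
qed

section \<open>Substitutions with a length eigenvector\<close>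

locale tile_substitution =
  fixes N :: nat and \<sigma> :: "nat \<Rightarrow> nat list" and \<xi> :: "nat \<Rightarrow> real" and lam :: real
  assumes letters_closed: "\<forall>a\<in>{1..N}. set (\<sigma> a) \<subseteq> {1..N}"
    and xi_pos: "\<forall>i\<in>{1..N}. 0 < \<xi> i"
    and lam_gt1: "1 < lam"
    and length_asymp:
      "\<forall>i\<in>{1..N}. (\<lambda>k. real (length (subst_iter \<sigma> k i)) / (\<xi> i * lam ^ k)) \<longlonglongrightarrow> 1"
begin

lemma set_subst_iter: "a \<in> {1..N} \<Longrightarrow> set (subst_iter \<sigma> k a) \<subseteq> {1..N}"
  using set_subst_iter_subset[OF letters_closed] by blast

lemma length_subst_iter_tendsto:
  assumes "a \<in> {1..N}"
  shows "(\<lambda>k. real (length (subst_iter \<sigma> k a)) / lam ^ k) \<longlonglongrightarrow> \<xi> a"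
proof -
  have "(\<lambda>k. \<xi> a * (real (length (subst_iter \<sigma> k a)) / (\<xi> a * lam ^ k))) \<longlonglongrightarrow> \<xi> a * 1"
    using length_asymp assms by (intro tendsto_mult_left) auto
  moreover have "\<xi> a \<noteq> 0" using xi_pos assms by fastforce
  ultimately show ?thesis by simp
qed

text \<open>Compare the limits of \<open>|\<sigma>\<^sup>k\<^sup>+\<^sup>1(v)| / lam\<^sup>k\<^sup>+\<^sup>1\<close> computed directly and
  through \<open>\<sigma>(v)\<close>.\<close>

lemma tile_length_subst:
  assumes v: "v \<in> {1..N}"
  shows "tile_length \<xi> (\<sigma> v) = lam * \<xi> v"
proof -
  let ?a = "\<lambda>k x. real (length (subst_iter \<sigma> k x)) / lam ^ k"
  let ?S = "\<lambda>f. \<Sum>x\<in>set (\<sigma> v). real (count_list (\<sigma> v) x) * f x"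
  have sv: "set (\<sigma> v) \<subseteq> {1..N}" using letters_closed v by blast
  have "?a (Suc k) v = ?S (?a k) / lam" for k
  proof -
    have "real (length (subst_iter \<sigma> (Suc k) v))
        = sum_list (map (\<lambda>x. real (length (subst_iter \<sigma> k x))) (\<sigma> v))"
      by (simp add: subst_iter_Suc length_concat sum_list_of_nat[symmetric] o_def)
    also have "\<dots> = ?S (\<lambda>x. real (length (subst_iter \<sigma> k x)))"
      by (rule sum_list_map_eq_sum_count_list) auto
    finally have "real (length (subst_iter \<sigma> (Suc k) v)) = ?S (\<lambda>x. real (length (subst_iter \<sigma> k x)))" .
    then show ?thesis by (simp add: sum_divide_distrib mult.commute)
  qed
  moreover have "(\<lambda>k. ?S (?a k) / lam) \<longlonglongrightarrow> ?S \<xi> / lam"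
    using sv lam_gt1
    by (intro tendsto_divide tendsto_const tendsto_sum tendsto_mult_left length_subst_iter_tendsto) auto
  ultimately have "(\<lambda>k. ?a (Suc k) v) \<longlonglongrightarrow> ?S \<xi> / lam" by simp
  moreover have "(\<lambda>k. ?a (Suc k) v) \<longlonglongrightarrow> \<xi> v"
    using length_subst_iter_tendsto[OF v] by (rule LIMSEQ_Suc)
  ultimately have "\<xi> v = ?S \<xi> / lam" by (rule LIMSEQ_unique[rotated])
  moreover have "tile_length \<xi> (\<sigma> v) = ?S \<xi>"
    unfolding tile_length_def by (rule sum_list_map_eq_sum_count_list) auto
  ultimately show ?thesis using lam_gt1 by simp
qed

lemma tile_length_subst_iter:
  assumes "v \<in> {1..N}"
  shows "tile_length \<xi> (subst_iter \<sigma> k v) = lam ^ k * \<xi> v"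
  using assms
proof (induction k arbitrary: v)
  case (Suc k)
  have sv: "set (\<sigma> v) \<subseteq> {1..N}" using letters_closed Suc.prems by blast
  have "tile_length \<xi> (subst_iter \<sigma> (Suc k) v) = sum_list (map (\<lambda>x. tile_length \<xi> (subst_iter \<sigma> k x)) (\<sigma> v))"
    by (simp add: subst_iter_Suc tile_length_concat)
  also have "\<dots> = sum_list (map (\<lambda>x. lam ^ k * \<xi> x) (\<sigma> v))"
    using sv Suc.IH by (intro arg_cong[where f=sum_list] map_cong) auto
  also have "\<dots> = lam ^ Suc k * \<xi> v"
    using tile_length_subst[OF Suc.prems] by (simp add: sum_list_const_mult tile_length_def)
  finally show ?case .
qed simp

lemma funpow_patch_subst:
  assumes "a \<in> {1..N}"
  shows "(patch_subst \<sigma> \<xi> lam ^^ n) {(a, 0)} = place_word \<xi> (- (lam ^ n * \<xi> a / 2)) (subst_iter \<sigma> n a)"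
proof (induction n)
  case (Suc n)
  have "\<forall>v\<in>set (subst_iter \<sigma> n a). tile_length \<xi> (\<sigma> v) = lam * \<xi> v"
    using set_subst_iter[OF assms] tile_length_subst by blast
  then show ?case
    using Suc by (simp add: patch_subst_place_word subst_iter_Suc_outer mult.assoc)
qed simp

text \<open>Every finite patch of a tiling in the space is a translate of a patch of some
  \<open>\<G>\<^sup>n(I\<^sub>a)\<close>, i.e. of some placed word \<open>\<sigma>\<^sup>n(a)\<close>; \<open>card\<close> of an infinite set is \<open>0\<close>.\<close>

lemma count_tiles_le_window_count_bound:
  assumes T: "T \<in> tiling_space N \<sigma> \<xi> lam" and X: "0 \<le> X"
    and bound: "\<And>n a c lo. a \<in> {1..N} \<Longrightarrow> real (window_count \<xi> B c (subst_iter \<sigma> n a) lo (lo + t)) \<le> X"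
  shows "real (count_tiles \<xi> T B t) \<le> X"
proof -
  define S where "S = {tt \<in> T. fst tt \<in> B \<and> tile_set \<xi> tt \<subseteq> {0..t}}"
  show ?thesis
  proof (cases "finite S")
    case True
    have "S \<subseteq> T" by (auto simp: S_def)
    with T True obtain n a u where a: "a \<in> {1..N}"
      and Su: "S \<subseteq> translate_patch u ((patch_subst \<sigma> \<xi> lam ^^ n) {(a, 0)})"
      unfolding tiling_space_def by blast
    define c where "c = - (lam ^ n * \<xi> a / 2)"
    define Q where "Q = {tt \<in> place_word \<xi> c (subst_iter \<sigma> n a). fst tt \<in> B \<and> tile_set \<xi> tt \<subseteq> {- u..- u + t}}"
    have "S \<subseteq> (\<lambda>(b, x). (b, x + u)) ` Q"
    proof
      fix s assume s: "s \<in> S"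
      then obtain b y where b: "(b, y) \<in> place_word \<xi> c (subst_iter \<sigma> n a)" "s = (b, y + u)"
        using Su unfolding funpow_patch_subst[OF a] translate_patch_def c_def by auto
      have "fst s \<in> B" "tile_set \<xi> s \<subseteq> {0..t}" using s by (auto simp: S_def)
      then have "(b, y) \<in> Q"
        using b by (auto simp: Q_def tile_set_def)
      then show "s \<in> (\<lambda>(b, x). (b, x + u)) ` Q"
        using b(2) by force
    qed
    then have "card S \<le> card ((\<lambda>(b, x). (b, x + u)) ` Q)"
      by (intro card_mono) (auto simp: Q_def)
    also have "\<dots> \<le> card Q"
      by (rule card_image_le) (simp add: Q_def)
    finally have "real (count_tiles \<xi> T B t) \<le> real (window_count \<xi> B c (subst_iter \<sigma> n a) (- u) (- u + t))"
      by (simp add: count_tiles_def window_count_def S_def Q_def)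
    also have "\<dots> \<le> X" by (rule bound[OF a])
    finally show ?thesis .
  qed (simp add: count_tiles_def S_def X)
qed

text \<open>Cut \<open>\<sigma>\<^sup>n(a)\<close> into the pieces \<open>\<sigma>\<^sup>k(v)\<close>, \<open>v\<close> a letter of \<open>\<sigma>\<^sup>n\<^sup>-\<^sup>k(a)\<close>: each has
  length at least \<open>lam\<^sup>k \<delta>\<close>, so few of them meet the window.\<close>

lemma window_count_subst_iter_le:
  assumes a: "a \<in> {1..N}" and k: "k \<le> n" and lo_hi: "lo \<le> hi"
    and \<delta>: "0 < \<delta>" "\<forall>v\<in>{1..N}. \<delta> \<le> \<xi> v"
    and M: "0 \<le> M" "\<forall>v\<in>{1..N}. real (count_letters S (subst_iter \<sigma> k v)) \<le> M"
  shows "real (window_count \<xi> S c (subst_iter \<sigma> n a) lo hi) \<le> M * ((hi - lo) / (lam ^ k * \<delta>) + 2)"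
proof -
  have split: "subst_iter \<sigma> n a = concat (map (subst_iter \<sigma> k) (subst_iter \<sigma> (n - k) a))"
    using subst_iter_add[of \<sigma> "n - k" k a] k by simp
  have D: "0 < lam ^ k * \<delta>" using lam_gt1 \<delta>(1) by simp
  have "\<forall>v\<in>set (subst_iter \<sigma> (n - k) a). lam ^ k * \<delta> \<le> tile_length \<xi> (subst_iter \<sigma> k v)
          \<and> real (count_letters S (subst_iter \<sigma> k v)) \<le> M \<and> (\<forall>x\<in>set (subst_iter \<sigma> k v). 0 \<le> \<xi> x)"
  proof
    fix v assume "v \<in> set (subst_iter \<sigma> (n - k) a)"
    then have v: "v \<in> {1..N}" using set_subst_iter[OF a] by blast
    have "lam ^ k * \<delta> \<le> tile_length \<xi> (subst_iter \<sigma> k v)"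
      using tile_length_subst_iter[OF v] \<delta>(2) v lam_gt1 by simp
    moreover have "\<forall>x\<in>set (subst_iter \<sigma> k v). 0 \<le> \<xi> x"
      using set_subst_iter[OF v] xi_pos by fastforce
    ultimately show "lam ^ k * \<delta> \<le> tile_length \<xi> (subst_iter \<sigma> k v)
          \<and> real (count_letters S (subst_iter \<sigma> k v)) \<le> M \<and> (\<forall>x\<in>set (subst_iter \<sigma> k v). 0 \<le> \<xi> x)"
      using M(2) v by blast
  qed
  then have "real (window_count \<xi> S c (subst_iter \<sigma> n a) lo hi) \<le> M * window_pieces (lam ^ k * \<delta>) lo hi c"
    unfolding split by (rule window_count_concat_le[OF D lo_hi M(1)])
  also have "\<dots> \<le> M * ((hi - lo) / (lam ^ k * \<delta>) + 2)"
    by (intro mult_left_mono window_pieces_le D lo_hi M(1))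
  finally show ?thesis .
qed

end

section \<open>Block upper triangular substitutions\<close>

locale upper_triangular_substitution = tile_substitution +
  fixes m :: nat
  assumes m_lt: "m < N"
    and lower_zero: "\<forall>a\<in>{m+1..N}. \<forall>b\<in>{1..m}. count_list (\<sigma> b) a = 0"
begin

abbreviation B_letters :: "nat set" where "B_letters \<equiv> {m+1..N}"

abbreviation B_mat :: "nat mat" where "B_mat \<equiv> subst_block \<sigma> m (N - m) m (N - m)"

lemma B_letters_nonempty: "B_letters \<noteq> {}"
  using m_lt by simp

lemma B_letters_eq_image: "B_letters = (\<lambda>l. m + l + 1) ` {..<N - m}"
proof
  show "B_letters \<subseteq> (\<lambda>l. m + l + 1) ` {..<N - m}"
  proof
    fix x assume "x \<in> B_letters"
    then have "x = m + (x - m - 1) + 1" "x - m - 1 < N - m" by auto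
    then show "x \<in> (\<lambda>l. m + l + 1) ` {..<N - m}" by blast
  qed
qed auto

lemma set_subst_A_letter: "b \<in> {1..m} \<Longrightarrow> set (\<sigma> b) \<subseteq> {1..m}"
proof
  fix x assume b: "b \<in> {1..m}" and x: "x \<in> set (\<sigma> b)"
  have "b \<in> {1..N}" using b m_lt by auto
  then have "x \<in> {1..N}" using letters_closed x by blast
  moreover have "x \<notin> B_letters" using lower_zero b x by (fastforce simp: count_list_0_iff)
  ultimately show "x \<in> {1..m}" by auto
qed

lemma set_subst_iter_A_letter: "b \<in> {1..m} \<Longrightarrow> set (subst_iter \<sigma> k b) \<subseteq> {1..m}"
  using set_subst_iter_subset[of "{1..m}" \<sigma>] set_subst_A_letter by blast

lemma count_list_subst_iter_Suc_B_letter: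
  assumes i: "i \<in> B_letters" and j: "j \<in> {1..N}"
  shows "count_list (subst_iter \<sigma> (Suc k) j) i
           = (\<Sum>l<N - m. count_list (\<sigma> j) (m + l + 1) * count_list (subst_iter \<sigma> k (m + l + 1)) i)"
proof -
  let ?f = "\<lambda>x. count_list (\<sigma> j) x * count_list (subst_iter \<sigma> k x) i"
  have "count_list (subst_iter \<sigma> (Suc k) j) i = sum_list (map (\<lambda>x. count_list (subst_iter \<sigma> k x) i) (\<sigma> j))"
    by (simp add: subst_iter_Suc count_list_concat o_def)
  also have "\<dots> = (\<Sum>x\<in>{1..m} \<union> B_letters. ?f x)"
  proof -
    have "set (\<sigma> j) \<subseteq> {1..N}" using letters_closed j by blast
    then have "set (\<sigma> j) \<subseteq> {1..m} \<union> B_letters" by auto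
    from sum_list_map_eq_sum_count_list[OF this, of "\<lambda>x. count_list (subst_iter \<sigma> k x) i"]
    show ?thesis by simp
  qed
  also have "\<dots> = (\<Sum>x\<in>B_letters. ?f x)"
  proof -
    have "?f x = 0" if "x \<in> {1..m}" for x
      using set_subst_iter_A_letter[OF that, of k] i by (auto simp: count_list_0_iff)
    then show ?thesis by (simp add: sum.union_disjoint)
  qed
  also have "\<dots> = (\<Sum>l<N - m. ?f (m + l + 1))"
    unfolding B_letters_eq_image by (simp add: sum.reindex inj_on_def)
  finally show ?thesis .
qed

lemma B_mat_pow_entry:
  assumes "i < N - m" "j < N - m"
  shows "(map_mat (of_nat :: nat \<Rightarrow> 'a :: semiring_1) B_mat ^\<^sub>m k) $$ (i, j)
           = of_nat (count_list (subst_iter \<sigma> k (m + j + 1)) (m + i + 1))"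
  using assms(2)
proof (induction k arbitrary: j)
  case 0
  then show ?case using assms(1) by (simp add: subst_block_def)
next
  case (Suc k)
  let ?X = "map_mat (of_nat :: nat \<Rightarrow> 'a) B_mat"
  have X: "?X \<in> carrier_mat (N - m) (N - m)" by (simp add: subst_block_def)
  have "(?X ^\<^sub>m Suc k) $$ (i, j) = (\<Sum>l<N - m. (?X ^\<^sub>m k) $$ (i, l) * ?X $$ (l, j))"
    using X assms(1) Suc.prems by (simp add: scalar_prod_def lessThan_atLeast0)
  also have "\<dots> = (\<Sum>l<N - m. of_nat (count_list (subst_iter \<sigma> k (m + l + 1)) (m + i + 1)
                                       * count_list (\<sigma> (m + j + 1)) (m + l + 1)))"
    using Suc.IH assms(1) Suc.prems by (intro sum.cong) (simp_all add: subst_block_def)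
  also have "\<dots> = of_nat (\<Sum>l<N - m. count_list (subst_iter \<sigma> k (m + l + 1)) (m + i + 1)
                                   * count_list (\<sigma> (m + j + 1)) (m + l + 1))"
    by (simp only: of_nat_sum)
  also have "\<dots> = of_nat (count_list (subst_iter \<sigma> (Suc k) (m + j + 1)) (m + i + 1))"
    using assms(1) Suc.prems by (subst count_list_subst_iter_Suc_B_letter) (auto simp: mult.commute)
  finally show ?case .
qed

definition B_count :: "nat \<Rightarrow> nat \<Rightarrow> nat" where
  "B_count k v = count_letters B_letters (subst_iter \<sigma> k v)"

lemma B_count_add: "B_count (j + k) v = sum_list (map (B_count k) (subst_iter \<sigma> j v))"
  unfolding B_count_def subst_iter_add count_letters_concat ..

lemma B_count_A_letter: "v \<in> {1..m} \<Longrightarrow> B_count k v = 0"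
  using set_subst_iter_A_letter[of v k]
  by (fastforce simp: B_count_def count_letters_def filter_empty_conv)

text \<open>The polynomial factor comes from the nontrivial Jordan blocks of \<open>B_mat\<close>.\<close>

lemma B_count_poly_bound:
  assumes r: "0 < rho B_mat"
  shows "\<exists>E>0. \<forall>n\<ge>1. \<forall>v\<in>B_letters. real (B_count n v) \<le> E * rho B_mat ^ n * real n ^ (N - m - 1)"
proof -
  let ?d = "N - m - 1"
  have "map_mat of_nat B_mat \<in> carrier_mat (N - m) (N - m)"
    by (simp add: subst_block_def)
  from spectral_radius_pow_norm_bound[OF this r[unfolded rho_def]]
  obtain c1 c2 where c: "\<forall>k i j. i < N - m \<longrightarrow> j < N - m \<longrightarrow>
      cmod ((map_mat of_nat B_mat ^\<^sub>m k) $$ (i, j)) \<le> rho B_mat ^ k * (c1 + c2 * real k ^ ?d)"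
    unfolding rho_def by blast
  define E where "E = real (N - m) * (\<bar>c1\<bar> + \<bar>c2\<bar>) + 1"
  have "real (B_count n v) \<le> E * rho B_mat ^ n * real n ^ ?d" if n: "1 \<le> n" and v: "v \<in> B_letters" for n v
  proof -
    have one: "1 \<le> real n ^ ?d" using n by simp
    have entry: "real (count_list (subst_iter \<sigma> n v) i) \<le> rho B_mat ^ n * ((\<bar>c1\<bar> + \<bar>c2\<bar>) * real n ^ ?d)"
      if i: "i \<in> B_letters" for i
    proof -
      obtain i' j' where "i' < N - m" "i = m + i' + 1" "j' < N - m" "v = m + j' + 1"
        using i v unfolding B_letters_eq_image by blast
      then have "real (count_list (subst_iter \<sigma> n v) i) \<le> rho B_mat ^ n * (c1 + c2 * real n ^ ?d)"
        using c[rule_format, of i' j' n] B_mat_pow_entry[where 'a=complex, of i' j' n] by simp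
      also have "c1 + c2 * real n ^ ?d \<le> (\<bar>c1\<bar> + \<bar>c2\<bar>) * real n ^ ?d"
      proof -
        have "c1 \<le> \<bar>c1\<bar> * real n ^ ?d"
          using mult_left_mono[OF one abs_ge_zero, of c1] abs_ge_self[of c1] by simp
        moreover have "c2 * real n ^ ?d \<le> \<bar>c2\<bar> * real n ^ ?d"
          using one by (intro mult_right_mono) auto
        ultimately show ?thesis by (simp add: distrib_right)
      qed
      finally show ?thesis using r by (simp add: mult_left_mono)
    qed
    have "real (B_count n v) = (\<Sum>i\<in>B_letters. real (count_list (subst_iter \<sigma> n v) i))"
      by (simp add: B_count_def count_letters_eq_sum_count_list)
    also have "\<dots> \<le> real (card B_letters) * (rho B_mat ^ n * ((\<bar>c1\<bar> + \<bar>c2\<bar>) * real n ^ ?d))"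
      by (rule sum_bounded_above) (rule entry)
    also have "\<dots> \<le> E * rho B_mat ^ n * real n ^ ?d"
      using r one m_lt by (simp add: E_def algebra_simps)
    finally show ?thesis .
  qed
  moreover have "0 < E" by (simp add: E_def add_nonneg_pos)
  ultimately show ?thesis by blast
qed

lemma primitive_B_mat_connects:
  assumes "primitive_mat B_mat"
  obtains p where "1 \<le> p" "\<And>v w. v \<in> B_letters \<Longrightarrow> w \<in> B_letters \<Longrightarrow> w \<in> set (subst_iter \<sigma> p v)"
proof -
  obtain p where p: "1 \<le> p" "\<And>i j. i < N - m \<Longrightarrow> j < N - m \<Longrightarrow> 0 < (B_mat ^\<^sub>m p) $$ (i, j)"
    using assms unfolding primitive_mat_def by (auto simp: subst_block_def)
  have "w \<in> set (subst_iter \<sigma> p v)" if v: "v \<in> B_letters" and w: "w \<in> B_letters" for v w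
  proof -
    obtain i j where "i < N - m" "w = m + i + 1" "j < N - m" "v = m + j + 1"
      using v w unfolding B_letters_eq_image by blast
    moreover have "map_mat (of_nat :: nat \<Rightarrow> nat) B_mat = B_mat" by (rule eq_matI) auto
    ultimately have "0 < count_list (subst_iter \<sigma> p v) w"
      using p(2)[of i j] B_mat_pow_entry[where 'a=nat, of i j p] by simp
    then show ?thesis by (metis count_list_0_iff less_irrefl)
  qed
  then show ?thesis using p(1) that by blast
qed

definition B_count_min :: "nat \<Rightarrow> nat" where
  "B_count_min k = Min (B_count k ` B_letters)"

lemma B_count_min_le: "v \<in> B_letters \<Longrightarrow> B_count_min k \<le> B_count k v"
  by (simp add: B_count_min_def)

lemma B_count_min_attained: obtains v where "v \<in> B_letters" "B_count_min k = B_count k v"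
proof -
  have "B_count_min k \<in> B_count k ` B_letters"
    unfolding B_count_min_def using B_letters_nonempty by (intro Min_in) auto
  then show ?thesis using that by blast
qed

lemma B_count_min_supermult: "B_count_min j * B_count_min k \<le> B_count_min (j + k)"
proof -
  obtain v where v: "v \<in> B_letters" "B_count_min (j + k) = B_count (j + k) v"
    by (rule B_count_min_attained)
  have "B_count_min j * B_count_min k \<le> count_letters B_letters (subst_iter \<sigma> j v) * B_count_min k"
    using B_count_min_le[OF v(1)] by (simp add: B_count_def)
  also have "\<dots> \<le> sum_list (map (B_count k) (subst_iter \<sigma> j v))"
    using B_count_min_le by (intro count_letters_mult_le_sum_list) blast
  also have "\<dots> = B_count_min (j + k)" using v(2) by (simp add: B_count_add)
  finally show ?thesis .
qed

lemma B_count_min_le_power: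
  assumes r: "0 < rho B_mat"
  shows "real (B_count_min k) \<le> rho B_mat ^ k"
proof -
  obtain E where E: "0 < E"
    and growth: "\<And>n v. 1 \<le> n \<Longrightarrow> v \<in> B_letters \<Longrightarrow> real (B_count n v) \<le> E * rho B_mat ^ n * real n ^ (N - m - 1)"
    using B_count_poly_bound[OF r] by blast
  obtain v where v: "v \<in> B_letters" using B_letters_nonempty by blast
  show ?thesis
  proof (rule supermultiplicative_le_power[OF _ _ r E])
    show "real (B_count_min j) * real (B_count_min k) \<le> real (B_count_min (j + k))" for j k
      using B_count_min_supermult[of j k] by (simp flip: of_nat_mult)
    show "real (B_count_min n) \<le> E * rho B_mat ^ n * real n ^ (N - m - 1)" if "1 \<le> n" for n
      using B_count_min_le[OF v, of n] growth[OF that v] by linarith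
  qed simp
qed

text \<open>By primitivity every \<open>B\<close>-letter occurs in \<open>\<sigma>\<^sup>p(u)\<close> for the \<open>u\<close> realising the
  minimum at level \<open>p + k\<close>, hence \<open>B_count k v \<le> B_count_min (p + k)\<close>.\<close>

lemma B_count_le_power:
  assumes r: "0 < rho B_mat" and prim: "primitive_mat B_mat"
  obtains C where "0 < C" "\<And>k v. v \<in> {1..N} \<Longrightarrow> real (B_count k v) \<le> C * rho B_mat ^ k"
proof -
  obtain p where p: "\<And>v w. v \<in> B_letters \<Longrightarrow> w \<in> B_letters \<Longrightarrow> w \<in> set (subst_iter \<sigma> p v)"
    using primitive_B_mat_connects[OF prim] by blast
  have bound: "real (B_count k v) \<le> rho B_mat ^ p * rho B_mat ^ k" if v: "v \<in> {1..N}" for k v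
  proof (cases "v \<le> m")
    case True
    then show ?thesis using v r B_count_A_letter[of v k] by simp
  next
    case False
    then have vB: "v \<in> B_letters" using v by simp
    obtain u where u: "u \<in> B_letters" "B_count_min (p + k) = B_count (p + k) u"
      by (rule B_count_min_attained)
    have "B_count k v \<le> sum_list (map (B_count k) (subst_iter \<sigma> p u))"
      using p[OF u(1) vB] by (simp add: member_le_sum_list)
    also have "\<dots> = B_count_min (p + k)" using u(2) by (simp add: B_count_add)
    finally have "real (B_count k v) \<le> real (B_count_min (p + k))" by simp
    also have "\<dots> \<le> rho B_mat ^ (p + k)" by (rule B_count_min_le_power[OF r])
    finally show ?thesis by (simp add: power_add)
  qed
  show ?thesis
    using r by (intro that[OF _ bound]) auto
qed

text \<open>At scale \<open>t\<close> choose \<open>k\<close> with \<open>lam\<^sup>k \<delta> \<le> t < lam\<^sup>k\<^sup>+\<^sup>1 \<delta>\<close>: a window of length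
  \<open>t\<close> meets at most \<open>lam + 2\<close> pieces \<open>\<sigma>\<^sup>k(v)\<close>, each with at most \<open>C \<rho>\<^sup>k\<close> letters from
  \<open>B\<close>, and \<open>\<rho>\<^sup>k \<le> (t / \<delta>)\<^sup>\<alpha>\<close>.\<close>

lemma window_count_B_letters_le_powr:
  assumes r: "1 < rho B_mat" and prim: "primitive_mat B_mat"
  obtains K where "0 < K"
    "\<And>n a c lo t. a \<in> {1..N} \<Longrightarrow> 0 < t \<Longrightarrow>
       real (window_count \<xi> B_letters c (subst_iter \<sigma> n a) lo (lo + t))
         \<le> K * t powr (ln (rho B_mat) / ln lam)"
proof -
  let ?r = "rho B_mat" and ?\<alpha> = "ln (rho B_mat) / ln lam"
  have "0 < ?r" using r by simp
  then obtain C where C: "0 < C" "\<And>k v. v \<in> {1..N} \<Longrightarrow> real (B_count k v) \<le> C * ?r ^ k"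
    using B_count_le_power[OF _ prim] by blast
  define \<delta> where "\<delta> = Min (\<xi> ` {1..N})"
  have \<delta>: "0 < \<delta>" "\<forall>v\<in>{1..N}. \<delta> \<le> \<xi> v"
    using xi_pos m_lt unfolding \<delta>_def by (auto simp: Min_gr_iff)
  define K where "K = C * (lam + 2) / \<delta> powr ?\<alpha>"
  have bound: "real (window_count \<xi> B_letters c (subst_iter \<sigma> n a) lo (lo + t)) \<le> K * t powr ?\<alpha>"
    if a: "a \<in> {1..N}" and t: "0 < t" for n a c lo t
  proof (cases "t < \<delta>")
    case True
    have "\<forall>v\<in>set (subst_iter \<sigma> n a). \<delta> \<le> \<xi> v" using \<delta>(2) set_subst_iter[OF a] by blast
    then have "window_count \<xi> B_letters c (subst_iter \<sigma> n a) lo (lo + t) = 0"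
      using True \<delta>(1) by (intro window_count_eq_0_if_short) auto
    then show ?thesis using C(1) \<delta>(1) lam_gt1 by (simp add: K_def)
  next
    case False
    then obtain k where k: "lam ^ k \<le> t / \<delta>" "t / \<delta> < lam ^ Suc k"
      using ex_power_bracket[OF lam_gt1, of "t / \<delta>"] \<delta>(1) by auto
    have count: "real (window_count \<xi> B_letters c (subst_iter \<sigma> n a) lo (lo + t)) \<le> C * ?r ^ k * (lam + 2)"
    proof (cases "k \<le> n")
      case True
      have "real (window_count \<xi> B_letters c (subst_iter \<sigma> n a) lo (lo + t))
          \<le> C * ?r ^ k * ((lo + t - lo) / (lam ^ k * \<delta>) + 2)"
        using C r t by (intro window_count_subst_iter_le[OF a True _ \<delta>]) (auto simp: B_count_def)
      also have "(lo + t - lo) / (lam ^ k * \<delta>) \<le> lam"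
        using k(2) \<delta>(1) lam_gt1 by (simp add: field_simps)
      then have "C * ?r ^ k * ((lo + t - lo) / (lam ^ k * \<delta>) + 2) \<le> C * ?r ^ k * (lam + 2)"
        using C(1) r by (intro mult_left_mono) auto
      finally show ?thesis .
    next
      case False
      have "real (window_count \<xi> B_letters c (subst_iter \<sigma> n a) lo (lo + t)) \<le> real (B_count n a)"
        using window_count_le_count_letters by (simp add: B_count_def)
      also have "\<dots> \<le> C * ?r ^ n" by (rule C(2)[OF a])
      also have "\<dots> \<le> C * ?r ^ k"
        using False C(1) r by (intro mult_left_mono power_increasing) auto
      also have "\<dots> \<le> C * ?r ^ k * (lam + 2)"
        using C(1) r lam_gt1 by simp
      finally show ?thesis .
    qed
    have "?r ^ k \<le> (t / \<delta>) powr ?\<alpha>"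
      using power_le_powr_ln_ratio[OF lam_gt1 _ k(1)] r by simp
    also have "\<dots> = t powr ?\<alpha> / \<delta> powr ?\<alpha>"
      using t \<delta>(1) by (simp add: powr_divide)
    finally have "C * ?r ^ k * (lam + 2) \<le> C * (t powr ?\<alpha> / \<delta> powr ?\<alpha>) * (lam + 2)"
      using C(1) lam_gt1 by (intro mult_right_mono mult_left_mono) auto
    also have "\<dots> = K * t powr ?\<alpha>"
      by (simp add: K_def)
    finally show ?thesis using count by linarith
  qed
  show ?thesis
    using C(1) \<delta>(1) lam_gt1 by (intro that[OF _ bound]) (auto simp: K_def)
qed

end

theorem mainTheorem10:
  fixes N m :: nat and \<sigma> :: "nat \<Rightarrow> nat list" and \<xi> :: "nat \<Rightarrow> real"
  assumes m_pos: "1 \<le> m" and m_lt: "m < N"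
    and subst: "\<forall>a\<in>{1..N}. \<sigma> a \<noteq> [] \<and> set (\<sigma> a) \<subseteq> {1..N}"
    and lower_zero: "\<forall>a\<in>{m+1..N}. \<forall>b\<in>{1..m}. count_list (\<sigma> b) a = 0"
    and C_nonzero: "\<exists>a\<in>{1..m}. \<exists>b\<in>{m+1..N}. count_list (\<sigma> b) a \<noteq> 0"
    and A_prim: "primitive_mat (subst_block \<sigma> 0 m 0 m)"
    and B_prim: "primitive_mat (subst_block \<sigma> m (N - m) m (N - m))"
    and rho_order: "rho (subst_block \<sigma> 0 m 0 m) > rho (subst_block \<sigma> m (N - m) m (N - m))"
    and rhoB_gt1: "rho (subst_block \<sigma> m (N - m) m (N - m)) > 1"
    and xi: "\<forall>i\<in>{1..N}. \<xi> i > 0 \<and>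
       (\<lambda>k. real (length (subst_iter \<sigma> k i)) / (\<xi> i * rho (subst_block \<sigma> 0 m 0 m) ^ k))
         \<longlonglongrightarrow> 1"
  shows "\<exists>K>0. \<forall>T\<in>tiling_space N \<sigma> \<xi> (rho (subst_block \<sigma> 0 m 0 m)). \<forall>t>0.
           real (count_tiles \<xi> T {m+1..N} t) \<le>
             K * t powr (ln (rho (subst_block \<sigma> m (N - m) m (N - m))) / ln (rho (subst_block \<sigma> 0 m 0 m)))"
proof -
  let ?lam = "rho (subst_block \<sigma> 0 m 0 m)"
  interpret upper_triangular_substitution N \<sigma> \<xi> ?lam m
    using subst xi rho_order rhoB_gt1 m_lt lower_zero
    by unfold_locales auto
  obtain K where K: "0 < K"
    "\<And>n a c lo t. a \<in> {1..N} \<Longrightarrow> 0 < t \<Longrightarrow>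
       real (window_count \<xi> B_letters c (subst_iter \<sigma> n a) lo (lo + t))
         \<le> K * t powr (ln (rho B_mat) / ln ?lam)"
    using window_count_B_letters_le_powr[OF rhoB_gt1 B_prim] by blast
  have "real (count_tiles \<xi> T B_letters t) \<le> K * t powr (ln (rho B_mat) / ln ?lam)"
    if "T \<in> tiling_space N \<sigma> \<xi> ?lam" "0 < t" for T t
    using that K by (intro count_tiles_le_window_count_bound) auto
  then show ?thesis using K(1) by blast
qed

end
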